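(* For every integer $k\ge 2$, $$F_v(J_{2k+1},J_{2k+1};2k+1)\le 5\,F_v(J_{k+1},J_{k+1};k+1).$$
   Context: All graphs are finite and simple. $J_n$ denotes the complete graph $K_n$ with one edge removed. "A graph $F$ contains $H$" means $F$ has a (not necessarily induced) subgraph isomorphic to $H$. $G\rightarrow(H_1,\dots,H_r)^v$ means: for every partition $V(G)=X_1\cup\dots\cup X_r$ there is $i$ such that the subgraph induced by $X_i$ contains $H_i$. $\mathcal{F}_v(H_1,\dots,H_r;k)$ is the set of $K_k$-free graphs $G$ with $G\rightarrow(H_1,\dots,H_r)^v$, and $F_v(H_1,\dots,H_r;k)$ is the minimum number of vertices of a graph in this set. *)

theory Defs
  imports Main
begin

type_synonym 'a graph = "'a set \<times> 'a set set"

definition is_graph :: "'a graph \<Rightarrow> bool" where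
  "is_graph G \<longleftrightarrow> finite (fst G) \<and>
     (\<forall>e\<in>snd G. \<exists>u v. u \<in> fst G \<and> v \<in> fst G \<and> u \<noteq> v \<and> e = {u, v})"

definition contains :: "'a graph \<Rightarrow> 'b graph \<Rightarrow> bool" where
  "contains G H \<longleftrightarrow> (\<exists>f. inj_on f (fst H) \<and> f ` fst H \<subseteq> fst G \<and>
      (\<forall>u v. {u, v} \<in> snd H \<longrightarrow> {f u, f v} \<in> snd G))"

definition induced :: "'a graph \<Rightarrow> 'a set \<Rightarrow> 'a graph" where
  "induced G X = (X, {e \<in> snd G. e \<subseteq> X})"

definition complete_graph :: "nat \<Rightarrow> nat graph" where
  "complete_graph n = ({0..<n}, {{i, j} | i j. i < n \<and> j < n \<and> i \<noteq> j})"

definition J_graph :: "nat \<Rightarrow> nat graph" where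
  "J_graph n = ({0..<n}, {{i, j} | i j. i < j \<and> j < n \<and> (i, j) \<noteq> (0, 1)})"

definition vertex_arrow2 :: "'a graph \<Rightarrow> 'b graph \<Rightarrow> 'c graph \<Rightarrow> bool" where
  "vertex_arrow2 G H1 H2 \<longleftrightarrow>
     (\<forall>X1 X2. X1 \<union> X2 = fst G \<and> X1 \<inter> X2 = {} \<longrightarrow>
        contains (induced G X1) H1 \<or> contains (induced G X2) H2)"

text \<open>The family F_v(H1,H2;k) (graphs taken on natural-number vertices, which is no
loss of generality up to isomorphism) and its minimum order F_v(H1,H2;k).\<close>
definition Fv_family :: "'b graph \<Rightarrow> 'c graph \<Rightarrow> nat \<Rightarrow> nat graph set" where
  "Fv_family H1 H2 k = {G. is_graph G \<and> \<not> contains G (complete_graph k) \<and> vertex_arrow2 G H1 H2}"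

definition Fv :: "'b graph \<Rightarrow> 'c graph \<Rightarrow> nat \<Rightarrow> nat" where
  "Fv H1 H2 k = (LEAST n. \<exists>G \<in> Fv_family H1 H2 k. card (fst G) = n)"

end

theory Submission
  imports Defs "HOL-Library.Nat_Bijection"
begin

text \<open>The bound is witnessed by the lexicographic product C5[G] of the pentagon with a
smallest graph G of the family for k+1. A clique of C5[G] lies over a clique of C5, hence over
at most two vertices, and meets each copy of G in at most k vertices, so C5[G] has no
K_{2k+1}. In a vertex 2-colouring of C5[G] every copy of G has a J_{k+1} in one of the colours;
as C5 is not bipartite, two adjacent copies get the same colour, and as adjacent copies are
completely joined, these two copies of J_{k+1} span a J_{2k+1}.\<close>

lemma is_graph_edgeD:
  assumes "is_graph G" "{a, b} \<in> snd G"
  shows "a \<in> fst G" "b \<in> fst G" "a \<noteq> b"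
  using assms by (auto simp: is_graph_def doubleton_eq_iff)

lemma is_graph_loop_free: "is_graph G \<Longrightarrow> {a} \<notin> snd G"
  by (auto simp: is_graph_def doubleton_eq_iff)

lemma contains_trans:
  assumes "contains G H" "contains H K"
  shows "contains G K"
proof -
  obtain f where f: "inj_on f (fst H)" "f ` fst H \<subseteq> fst G"
    "\<forall>u v. {u, v} \<in> snd H \<longrightarrow> {f u, f v} \<in> snd G"
    using assms(1) unfolding contains_def by blast
  obtain g where g: "inj_on g (fst K)" "g ` fst K \<subseteq> fst H"
    "\<forall>u v. {u, v} \<in> snd K \<longrightarrow> {g u, g v} \<in> snd H"
    using assms(2) unfolding contains_def by blast
  have "inj_on (f \<circ> g) (fst K)"
    using f(1) g(1,2) by (simp add: comp_inj_on inj_on_subset)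
  then show ?thesis
    unfolding contains_def using f g by (intro exI[of _ "f \<circ> g"]) fastforce
qed

definition clique :: "'a graph \<Rightarrow> 'a set \<Rightarrow> bool" where
  "clique G S \<longleftrightarrow> S \<subseteq> fst G \<and> (\<forall>a\<in>S. \<forall>b\<in>S. a \<noteq> b \<longrightarrow> {a, b} \<in> snd G)"

lemma clique_subset: "clique G S \<Longrightarrow> T \<subseteq> S \<Longrightarrow> clique G T"
  unfolding clique_def by blast

lemma contains_complete_graph_iff:
  "contains G (complete_graph m) \<longleftrightarrow> (\<exists>S. clique G S \<and> finite S \<and> card S = m)"
proof
  assume "contains G (complete_graph m)"
  then obtain f where f: "inj_on f {0..<m}" "f ` {0..<m} \<subseteq> fst G"
    "\<forall>u v. {u, v} \<in> snd (complete_graph m) \<longrightarrow> {f u, f v} \<in> snd G"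
    unfolding contains_def complete_graph_def by auto
  have "clique G (f ` {0..<m})"
    unfolding clique_def using f(2,3) by (fastforce simp: complete_graph_def)
  with f(1) show "\<exists>S. clique G S \<and> finite S \<and> card S = m"
    by (intro exI[of _ "f ` {0..<m}"]) (simp add: card_image)
next
  assume "\<exists>S. clique G S \<and> finite S \<and> card S = m"
  then obtain S where S: "clique G S" "finite S" "card S = m" by blast
  then obtain f where f: "bij_betw f {0..<m} S"
    using ex_bij_betw_nat_finite by blast
  show "contains G (complete_graph m)"
    unfolding contains_def
  proof (intro exI[of _ f] conjI allI impI)
    show "inj_on f (fst (complete_graph m))" "f ` fst (complete_graph m) \<subseteq> fst G"
      using f S(1) by (auto simp: complete_graph_def bij_betw_def clique_def)
    fix u v assume "{u, v} \<in> snd (complete_graph m)"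
    then have "u \<in> {0..<m}" "v \<in> {0..<m}" "u \<noteq> v"
      by (auto simp: complete_graph_def doubleton_eq_iff)
    then show "{f u, f v} \<in> snd G"
      using f S(1) unfolding bij_betw_def inj_on_def clique_def by blast
  qed
qed

lemma clique_card_le:
  assumes "\<not> contains G (complete_graph (k + 1))" "clique G S" "finite S"
  shows "card S \<le> k"
proof (rule ccontr)
  assume "\<not> card S \<le> k"
  then obtain T where "T \<subseteq> S" "card T = k + 1"
    using obtain_subset_with_card_n[of "k + 1" S] by auto
  then have "clique G T" "finite T"
    using assms(2,3) clique_subset finite_subset by metis+
  then have "contains G (complete_graph (k + 1))"
    using \<open>card T = k + 1\<close> contains_complete_graph_iff by blast
  with assms(1) show False ..
qed

lemma contains_J_graph_induced_iff:
  "contains (induced G X) (J_graph n) \<longleftrightarrow> (\<exists>f. inj_on f {0..<n} \<and> f ` {0..<n} \<subseteq> X \<and>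
     (\<forall>i j. i < j \<longrightarrow> j < n \<longrightarrow> (i, j) \<noteq> (0, 1) \<longrightarrow> {f i, f j} \<in> snd G))"
proof
  assume "contains (induced G X) (J_graph n)"
  then obtain f where f: "inj_on f (fst (J_graph n))" "f ` fst (J_graph n) \<subseteq> X"
    "\<And>u v. {u, v} \<in> snd (J_graph n) \<Longrightarrow> {f u, f v} \<in> snd (induced G X)"
    unfolding contains_def induced_def by auto
  have "{i, j} \<in> snd (J_graph n)" if "i < j" "j < n" "(i, j) \<noteq> (0, 1)" for i j
    using that unfolding J_graph_def snd_conv by blast
  with f show "\<exists>f. inj_on f {0..<n} \<and> f ` {0..<n} \<subseteq> X \<and>
      (\<forall>i j. i < j \<longrightarrow> j < n \<longrightarrow> (i, j) \<noteq> (0, 1) \<longrightarrow> {f i, f j} \<in> snd G)"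
    by (intro exI[of _ f]) (auto simp: J_graph_def induced_def)
next
  assume "\<exists>f. inj_on f {0..<n} \<and> f ` {0..<n} \<subseteq> X \<and>
      (\<forall>i j. i < j \<longrightarrow> j < n \<longrightarrow> (i, j) \<noteq> (0, 1) \<longrightarrow> {f i, f j} \<in> snd G)"
  then obtain f where f: "inj_on f {0..<n}" "f ` {0..<n} \<subseteq> X"
    "\<And>i j. i < j \<Longrightarrow> j < n \<Longrightarrow> (i, j) \<noteq> (0, 1) \<Longrightarrow> {f i, f j} \<in> snd G"
    by blast
  show "contains (induced G X) (J_graph n)"
    unfolding contains_def
  proof (intro exI[of _ f] conjI allI impI)
    show "inj_on f (fst (J_graph n))" "f ` fst (J_graph n) \<subseteq> fst (induced G X)"
      using f(1,2) by (auto simp: J_graph_def induced_def)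
    fix u v assume "{u, v} \<in> snd (J_graph n)"
    then obtain i j where ij: "{u, v} = {i, j}" "i < j" "j < n" "(i, j) \<noteq> (0, 1)"
      unfolding J_graph_def by auto
    then have "{f u, f v} = {f i, f j}"
      by (auto simp: doubleton_eq_iff)
    with ij f show "{f u, f v} \<in> snd (induced G X)"
      by (auto simp: induced_def image_subset_iff)
  qed
qed

subsection \<open>The lexicographic product\<close>

definition lex_product :: "'a graph \<Rightarrow> 'b graph \<Rightarrow> ('a \<times> 'b) graph" where
  "lex_product H G = (fst H \<times> fst G,
     {{(h, u), (h', u')} | h h' u u'. {h, h'} \<in> snd H \<and> u \<in> fst G \<and> u' \<in> fst G} \<union>
     {{(h, u), (h, u')} | h u u'. h \<in> fst H \<and> {u, u'} \<in> snd G})"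

lemma lex_product_edge_iff:
  "{(h, u), (h', u')} \<in> snd (lex_product H G) \<longleftrightarrow>
     {h, h'} \<in> snd H \<and> u \<in> fst G \<and> u' \<in> fst G \<or> h = h' \<and> h \<in> fst H \<and> {u, u'} \<in> snd G"
proof
  assume "{(h, u), (h', u')} \<in> snd (lex_product H G)"
  then show "{h, h'} \<in> snd H \<and> u \<in> fst G \<and> u' \<in> fst G \<or> h = h' \<and> h \<in> fst H \<and> {u, u'} \<in> snd G"
    unfolding lex_product_def by (auto simp: doubleton_eq_iff insert_commute)
qed (auto simp: lex_product_def)

lemma lex_product_is_graph:
  assumes "is_graph H" "is_graph G"
  shows "is_graph (lex_product H G)"
  unfolding is_graph_def
proof (intro conjI ballI)
  show "finite (fst (lex_product H G))"
    using assms by (simp add: is_graph_def lex_product_def)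
  fix e assume e: "e \<in> snd (lex_product H G)"
  then obtain h h' u u' where e_eq: "e = {(h, u), (h', u')}"
    unfolding lex_product_def by auto
  with e have "{h, h'} \<in> snd H \<and> u \<in> fst G \<and> u' \<in> fst G \<or>
      h = h' \<and> h \<in> fst H \<and> {u, u'} \<in> snd G"
    by (simp add: lex_product_edge_iff)
  then have "(h, u) \<in> fst (lex_product H G) \<and> (h', u') \<in> fst (lex_product H G) \<and>
      (h, u) \<noteq> (h', u')"
    using is_graph_edgeD[OF assms(1)] is_graph_edgeD[OF assms(2)]
      is_graph_loop_free[OF assms(1)] is_graph_loop_free[OF assms(2)]
    by (auto simp: lex_product_def)
  with e_eq show "\<exists>p q. p \<in> fst (lex_product H G) \<and>
      q \<in> fst (lex_product H G) \<and> p \<noteq> q \<and> e = {p, q}"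
    by blast
qed

lemma card_lex_product: "card (fst (lex_product H G)) = card (fst H) * card (fst G)"
  by (simp add: lex_product_def card_cartesian_product)

text \<open>A clique of the product projects to a clique of H and meets each fibre in a clique of G.\<close>
lemma clique_lex_product_card_le:
  assumes "is_graph H" "is_graph G" "clique (lex_product H G) S"
    and "\<And>T. clique H T \<Longrightarrow> card T \<le> m" "\<And>T. clique G T \<Longrightarrow> card T \<le> k"
  shows "card S \<le> m * k"
proof -
  have S_sub: "S \<subseteq> fst H \<times> fst G"
    using assms(3) by (simp add: clique_def lex_product_def)
  have adj: "{p, q} \<in> snd (lex_product H G)" if "p \<in> S" "q \<in> S" "p \<noteq> q" for p q
    using assms(3) that by (simp add: clique_def)
  define fibre where "fibre h = {u. (h, u) \<in> S}" for h
  have "clique H (fst ` S)"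
    unfolding clique_def
  proof (intro conjI ballI impI)
    show "fst ` S \<subseteq> fst H" using S_sub by auto
    fix a b assume "a \<in> fst ` S" "b \<in> fst ` S" "a \<noteq> b"
    then obtain u v where "(a, u) \<in> S" "(b, v) \<in> S" by force
    with \<open>a \<noteq> b\<close> show "{a, b} \<in> snd H"
      using adj[of "(a, u)" "(b, v)"] by (auto simp: lex_product_edge_iff)
  qed
  then have card_proj: "card (fst ` S) \<le> m" by (rule assms(4))
  have card_fibre: "card (fibre h) \<le> k" for h
  proof (rule assms(5))
    show "clique G (fibre h)"
      unfolding clique_def
    proof (intro conjI ballI impI)
      show "fibre h \<subseteq> fst G" using S_sub by (auto simp: fibre_def)
      fix u v assume "u \<in> fibre h" "v \<in> fibre h" "u \<noteq> v"
      then show "{u, v} \<in> snd G"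
        using adj[of "(h, u)" "(h, v)"] is_graph_loop_free[OF assms(1), of h]
        by (auto simp: fibre_def lex_product_edge_iff)
    qed
  qed
  have "S = (\<Union>h\<in>fst ` S. {h} \<times> fibre h)"
    by (force simp: fibre_def)
  moreover have "finite S"
    using S_sub assms(1,2) finite_subset by (auto simp: is_graph_def)
  ultimately have "card S \<le> (\<Sum>h\<in>fst ` S. card ({h} \<times> fibre h))"
    by (metis card_UN_le finite_imageI)
  also have "\<dots> \<le> (\<Sum>h\<in>fst ` S. k)"
    by (intro sum_mono) (simp add: card_cartesian_product card_fibre)
  also have "\<dots> \<le> m * k"
    using card_proj by simp
  finally show ?thesis .
qed

lemma lex_product_complete_free:
  assumes "is_graph H" "is_graph G"
    and "\<not> contains H (complete_graph (m + 1))" "\<not> contains G (complete_graph (k + 1))"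
  shows "\<not> contains (lex_product H G) (complete_graph (m * k + 1))"
proof
  assume "contains (lex_product H G) (complete_graph (m * k + 1))"
  then obtain S where S: "clique (lex_product H G) S" "card S = m * k + 1"
    by (auto simp: contains_complete_graph_iff)
  have "card T \<le> m" if "clique H T" for T
    using clique_card_le[OF assms(3) that] that assms(1) finite_subset
    by (auto simp: is_graph_def clique_def)
  moreover have "card T \<le> k" if "clique G T" for T
    using clique_card_le[OF assms(4) that] that assms(2) finite_subset
    by (auto simp: is_graph_def clique_def)
  ultimately have "card S \<le> m * k"
    using clique_lex_product_card_le[OF assms(1,2) S(1)] by blast
  with \<open>card S = m * k + 1\<close> show False by simp
qed

text \<open>Copies of J_{k+1} in two completely joined fibres combine to a copy of J_{2k+1}:
the second copy is used without its vertex 0, an endpoint of its missing edge.\<close>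
lemma lex_product_contains_J_graph:
  assumes "is_graph H" "{h, h'} \<in> snd H"
    and "contains (induced G {u \<in> fst G. (h, u) \<in> Y}) (J_graph (k + 1))"
    and "contains (induced G {u \<in> fst G. (h', u) \<in> Y}) (J_graph (k + 1))"
  shows "contains (induced (lex_product H G) Y) (J_graph (2 * k + 1))"
proof -
  obtain f where f: "inj_on f {0..<k + 1}" "f ` {0..<k + 1} \<subseteq> {u \<in> fst G. (h, u) \<in> Y}"
    "\<And>i j. i < j \<Longrightarrow> j < k + 1 \<Longrightarrow> (i, j) \<noteq> (0, 1) \<Longrightarrow> {f i, f j} \<in> snd G"
    using assms(3) unfolding contains_J_graph_induced_iff by blast
  obtain f' where f': "inj_on f' {0..<k + 1}" "f' ` {0..<k + 1} \<subseteq> {u \<in> fst G. (h', u) \<in> Y}"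
    "\<And>i j. i < j \<Longrightarrow> j < k + 1 \<Longrightarrow> (i, j) \<noteq> (0, 1) \<Longrightarrow> {f' i, f' j} \<in> snd G"
    using assms(4) unfolding contains_J_graph_induced_iff by blast
  have hh': "h \<in> fst H" "h \<noteq> h'"
    using is_graph_edgeD[OF assms(1,2)] by auto
  define g where "g t = (if t \<le> k then (h, f t) else (h', f' (t - k)))" for t
  have g_Y: "g t \<in> Y" if "t < 2 * k + 1" for t
    using that f(2) f'(2) by (auto simp: g_def image_subset_iff)
  have g_inj: "inj_on g {0..<2 * k + 1}"
  proof (rule inj_onI)
    fix s t assume "s \<in> {0..<2 * k + 1}" "t \<in> {0..<2 * k + 1}" "g s = g t"
    then show "s = t"
      using hh'(2) inj_onD[OF f(1), of s t] inj_onD[OF f'(1), of "s - k" "t - k"]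
      by (auto simp: g_def split: if_splits) arith
  qed
  have g_edge: "{g i, g j} \<in> snd (lex_product H G)"
    if "i < j" "j < 2 * k + 1" "(i, j) \<noteq> (0, 1)" for i j
  proof (cases "j \<le> k")
    case True
    with that show ?thesis
      using hh'(1) f(2,3) by (auto simp: g_def lex_product_edge_iff)
  next
    case j: False
    show ?thesis
    proof (cases "i \<le> k")
      case True
      with j that show ?thesis
        using assms(2) f(2) f'(2) by (auto simp: g_def lex_product_edge_iff image_subset_iff)
    next
      case False
      with j that show ?thesis
        using is_graph_edgeD(2)[OF assms(1,2)] f'(2) f'(3)[of "i - k" "j - k"]
        by (auto simp: g_def lex_product_edge_iff)
    qed
  qed
  show ?thesis
    unfolding contains_J_graph_induced_iff using g_inj g_Y g_edge by (auto simp: induced_def)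
qed

definition bipartite :: "'a graph \<Rightarrow> bool" where
  "bipartite H \<longleftrightarrow> (\<exists>c :: 'a \<Rightarrow> bool. \<forall>h h'. {h, h'} \<in> snd H \<longrightarrow> c h \<noteq> c h')"

text \<open>Colour a vertex h of a non-bipartite H by the class that contains J_{k+1} inside the
fibre over h; some edge of H is monochromatic.\<close>
lemma lex_product_vertex_arrow2_J_graph:
  assumes "is_graph H" "\<not> bipartite H"
    and "vertex_arrow2 G (J_graph (k + 1)) (J_graph (k + 1))"
  shows "vertex_arrow2 (lex_product H G) (J_graph (2 * k + 1)) (J_graph (2 * k + 1))"
  unfolding vertex_arrow2_def
proof (intro allI impI)
  fix X1 X2 assume X: "X1 \<union> X2 = fst (lex_product H G) \<and> X1 \<inter> X2 = {}"
  define fibre :: "('a \<times> 'b) set \<Rightarrow> 'a \<Rightarrow> 'b set"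
    where "fibre X h = {u \<in> fst G. (h, u) \<in> X}" for X h
  define c where "c h = contains (induced G (fibre X1 h)) (J_graph (k + 1))" for h
  have other: "contains (induced G (fibre X2 h)) (J_graph (k + 1))" if "h \<in> fst H" "\<not> c h" for h
  proof -
    have "fibre X1 h \<union> fibre X2 h = fst G" "fibre X1 h \<inter> fibre X2 h = {}"
      using X that(1) by (auto simp: fibre_def lex_product_def)
    with assms(3) that(2) show ?thesis
      unfolding vertex_arrow2_def c_def by blast
  qed
  obtain h h' where hh': "{h, h'} \<in> snd H" "c h = c h'"
    using assms(2) unfolding bipartite_def by blast
  then have "h \<in> fst H" "h' \<in> fst H"
    using is_graph_edgeD[OF assms(1)] by auto
  show "contains (induced (lex_product H G) X1) (J_graph (2 * k + 1)) \<or>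
      contains (induced (lex_product H G) X2) (J_graph (2 * k + 1))"
  proof (cases "c h")
    case True
    then show ?thesis
      using hh'(2) lex_product_contains_J_graph[OF assms(1) hh'(1), of G X1]
      unfolding c_def fibre_def by simp
  next
    case False
    then show ?thesis
      using hh'(2) other[of h] other[of h'] \<open>h \<in> fst H\<close> \<open>h' \<in> fst H\<close>
        lex_product_contains_J_graph[OF assms(1) hh'(1), of G X2]
      unfolding fibre_def by simp
  qed
qed

definition relabel :: "('a \<Rightarrow> 'b) \<Rightarrow> 'a graph \<Rightarrow> 'b graph" where
  "relabel f G = (f ` fst G, (\<lambda>e. f ` e) ` snd G)"

lemma relabel_is_graph:
  assumes "is_graph G" "inj_on f (fst G)"
  shows "is_graph (relabel f G)"
  unfolding is_graph_def
proof (intro conjI ballI)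
  show "finite (fst (relabel f G))"
    using assms(1) by (simp add: is_graph_def relabel_def)
  fix e assume "e \<in> snd (relabel f G)"
  then obtain u v where "u \<in> fst G" "v \<in> fst G" "u \<noteq> v" "e = {f u, f v}"
    using assms(1) unfolding relabel_def is_graph_def by auto
  with assms(2) show "\<exists>x y. x \<in> fst (relabel f G) \<and> y \<in> fst (relabel f G) \<and>
      x \<noteq> y \<and> e = {x, y}"
    by (auto simp: relabel_def inj_on_def)
qed

lemma card_relabel: "inj_on f (fst G) \<Longrightarrow> card (fst (relabel f G)) = card (fst G)"
  by (simp add: relabel_def card_image)

lemma contains_relabel:
  assumes "is_graph G" "inj_on f (fst G)"
  shows "contains G (relabel f G)"
  unfolding contains_def
proof (intro exI[of _ "inv_into (fst G) f"] conjI allI impI)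
  show "inj_on (inv_into (fst G) f) (fst (relabel f G))"
    by (simp add: relabel_def inj_on_inv_into)
  show "inv_into (fst G) f ` fst (relabel f G) \<subseteq> fst G"
    by (auto simp: relabel_def inv_into_into)
  fix x y assume "{x, y} \<in> snd (relabel f G)"
  then obtain a b where "{a, b} \<in> snd G" "{x, y} = {f a, f b}"
    using assms(1) unfolding relabel_def is_graph_def by auto
  moreover have "a \<in> fst G" "b \<in> fst G"
    using is_graph_edgeD[OF assms(1) \<open>{a, b} \<in> snd G\<close>] by auto
  ultimately show "{inv_into (fst G) f x, inv_into (fst G) f y} \<in> snd G"
    using assms(2) by (auto simp: doubleton_eq_iff insert_commute)
qed

lemma relabel_complete_free:
  assumes "is_graph G" "inj_on f (fst G)" "\<not> contains G K"
  shows "\<not> contains (relabel f G) K"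
  using assms(3) contains_trans[OF contains_relabel[OF assms(1,2)]] by blast

lemma contains_induced_relabel:
  assumes "inj_on f (fst G)" "Y \<subseteq> fst G" "f ` Y \<subseteq> X"
  shows "contains (induced (relabel f G) X) (induced G Y)"
  unfolding contains_def
proof (intro exI[of _ f] conjI allI impI)
  show "inj_on f (fst (induced G Y))" "f ` fst (induced G Y) \<subseteq> fst (induced (relabel f G) X)"
    using assms by (auto simp: induced_def intro: inj_on_subset)
  fix u v assume uv: "{u, v} \<in> snd (induced G Y)"
  then have "f ` {u, v} \<in> (\<lambda>e. f ` e) ` snd G"
    by (intro imageI) (simp add: induced_def)
  with uv assms(3) show "{f u, f v} \<in> snd (induced (relabel f G) X)"
    by (auto simp: induced_def relabel_def)
qed

lemma vertex_arrow2_relabel: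
  assumes "inj_on f (fst G)" "vertex_arrow2 G H1 H2"
  shows "vertex_arrow2 (relabel f G) H1 H2"
  unfolding vertex_arrow2_def
proof (intro allI impI)
  fix X1 X2 assume X: "X1 \<union> X2 = fst (relabel f G) \<and> X1 \<inter> X2 = {}"
  define Y where "Y X = {v \<in> fst G. f v \<in> X}" for X
  have "Y X1 \<union> Y X2 = fst G \<and> Y X1 \<inter> Y X2 = {}"
    using X by (auto simp: Y_def relabel_def)
  then have "contains (induced G (Y X1)) H1 \<or> contains (induced G (Y X2)) H2"
    using assms(2) unfolding vertex_arrow2_def by blast
  moreover have "contains (induced (relabel f G) X) (induced G (Y X))" for X
    using assms(1) by (rule contains_induced_relabel) (auto simp: Y_def)
  ultimately show "contains (induced (relabel f G) X1) H1 \<or> contains (induced (relabel f G) X2) H2"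
    by (meson contains_trans)
qed

subsection \<open>The pentagon\<close>

definition pentagon :: "nat graph" where
  "pentagon = ({0..<5}, {{0, 1}, {1, 2}, {2, 3}, {3, 4}, {4, 0}})"

lemma pentagon_is_graph: "is_graph pentagon"
  unfolding is_graph_def pentagon_def
  by (simp add: doubleton_eq_iff conj_disj_distribL ex_disj_distrib)

lemma pentagon_triangle_free: "\<not> contains pentagon (complete_graph 3)"
proof
  have edge_iff: "{a, b} \<in> snd pentagon \<longleftrightarrow>
      (a, b) \<in> {(0, 1), (1, 0), (1, 2), (2, 1), (2, 3), (3, 2), (3, 4), (4, 3), (4, 0), (0, 4)}"
    for a b :: nat
    unfolding pentagon_def by (auto simp: doubleton_eq_iff)
  assume "contains pentagon (complete_graph 3)"
  then obtain S where "clique pentagon S" "card S = 3"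
    unfolding contains_complete_graph_iff by blast
  moreover obtain x y z where "S = {x, y, z}" "x \<noteq> y" "y \<noteq> z" "x \<noteq> z"
    using \<open>card S = 3\<close> unfolding card_3_iff by blast
  ultimately have "{x, y} \<in> snd pentagon" "{y, z} \<in> snd pentagon" "{x, z} \<in> snd pentagon"
    unfolding clique_def by simp_all
  then show False
    unfolding edge_iff insert_iff prod.inject empty_iff by (elim disjE conjE; simp)
qed

lemma pentagon_not_bipartite: "\<not> bipartite pentagon"
proof
  assume "bipartite pentagon"
  then obtain c :: "nat \<Rightarrow> bool"
    where c: "\<And>h h'. {h, h'} \<in> snd pentagon \<Longrightarrow> c h \<noteq> c h'"
    unfolding bipartite_def by blast
  have "c 0 \<noteq> c 1" "c 1 \<noteq> c 2" "c 2 \<noteq> c 3" "c 3 \<noteq> c 4" "c 4 \<noteq> c 0"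
    by (rule c, simp add: pentagon_def)+
  then show False by blast
qed

lemma Fv_le_card: "G \<in> Fv_family H1 H2 k \<Longrightarrow> Fv H1 H2 k \<le> card (fst G)"
  unfolding Fv_def by (rule Least_le) blast

lemma Fv_attained:
  assumes "Fv_family H1 H2 k \<noteq> {}"
  obtains G where "G \<in> Fv_family H1 H2 k" "card (fst G) = Fv H1 H2 k"
proof -
  have "\<exists>n G. G \<in> Fv_family H1 H2 k \<and> card (fst G) = n"
    using assms by blast
  then show ?thesis
    using that LeastI_ex[of "\<lambda>n. \<exists>G \<in> Fv_family H1 H2 k. card (fst G) = n"]
    unfolding Fv_def by blast
qed

lemma lex_product_pentagon_in_Fv_family:
  assumes "G \<in> Fv_family (J_graph (k + 1)) (J_graph (k + 1)) (k + 1)"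
  shows "relabel prod_encode (lex_product pentagon G)
    \<in> Fv_family (J_graph (2 * k + 1)) (J_graph (2 * k + 1)) (2 * k + 1)"
proof -
  have G: "is_graph G" "\<not> contains G (complete_graph (k + 1))"
    "vertex_arrow2 G (J_graph (k + 1)) (J_graph (k + 1))"
    using assms by (auto simp: Fv_family_def)
  have "is_graph (lex_product pentagon G)"
    using pentagon_is_graph G(1) by (rule lex_product_is_graph)
  moreover have "\<not> contains (lex_product pentagon G) (complete_graph (2 * k + 1))"
    using lex_product_complete_free[OF pentagon_is_graph G(1), of 2 k]
      pentagon_triangle_free G(2)
    by (simp add: numeral_3_eq_3)
  moreover have "vertex_arrow2 (lex_product pentagon G) (J_graph (2 * k + 1)) (J_graph (2 * k + 1))"
    using pentagon_is_graph pentagon_not_bipartite G(3)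
    by (rule lex_product_vertex_arrow2_J_graph)
  ultimately show ?thesis
    unfolding Fv_family_def
    by (simp add: relabel_is_graph relabel_complete_free vertex_arrow2_relabel inj_prod_encode)
qed

theorem mainTheorem3:
  fixes k :: nat
  assumes "k \<ge> 2"
    and "Fv_family (J_graph (k+1)) (J_graph (k+1)) (k+1) \<noteq> {}"
  shows "Fv_family (J_graph (2*k+1)) (J_graph (2*k+1)) (2*k+1) \<noteq> {} \<and>
         Fv (J_graph (2*k+1)) (J_graph (2*k+1)) (2*k+1) \<le> 5 * Fv (J_graph (k+1)) (J_graph (k+1)) (k+1)"
proof -
  obtain G where G: "G \<in> Fv_family (J_graph (k+1)) (J_graph (k+1)) (k+1)"
    and card_G: "card (fst G) = Fv (J_graph (k+1)) (J_graph (k+1)) (k+1)"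
    using Fv_attained[OF assms(2)] .
  let ?P = "relabel prod_encode (lex_product pentagon G)"
  have P: "?P \<in> Fv_family (J_graph (2*k+1)) (J_graph (2*k+1)) (2*k+1)"
    using G by (rule lex_product_pentagon_in_Fv_family)
  have "card (fst ?P) = 5 * card (fst G)"
    by (simp add: card_relabel inj_prod_encode card_lex_product pentagon_def)
  with P card_G show ?thesis
    using Fv_le_card by fastforce
qed

end
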